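(* Let $P(k)=C_{p0}T_{p0}^k-C_mT_m^k$ be a high pair function (so $C_{p0},C_m>0$ and $0<T_m<T_{p0}<1$), and let $C_{pi}>0$, $T_{pi}$ with $T_m<T_{pi}<1$, $i=1,\dots,N$. Then the total function $S(k)=P(k)+\sum_{i=1}^N C_{pi}T_{pi}^k$ has exactly one point of abscissa intersection, exactly one maximum and exactly one inflection point; it is concave to the left of the inflection point and convex to the right of it, and $S(k)\to 0$ as $k\to\infty$.
   Context: A high pair function is $C_pT_p^k-C_mT_m^k$ with $C_p,C_m>0$ and $0<T_m<T_p<1$, real variable $k$. *)

theory Defs
  imports "HOL-Analysis.Analysis"
begin

definition total_fun :: "real \<Rightarrow> real \<Rightarrow> real \<Rightarrow> real \<Rightarrow> nat \<Rightarrow> (nat \<Rightarrow> real) \<Rightarrow> (nat \<Rightarrow> real) \<Rightarrow> real \<Rightarrow> real" where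
  "total_fun Cp0 Tp0 Cm Tm N Cp Tp k =
     Cp0 * Tp0 powr k - Cm * Tm powr k + (\<Sum>i=1..N. Cp i * Tp i powr k)"

definition local_max_point :: "(real \<Rightarrow> real) \<Rightarrow> real \<Rightarrow> bool" where
  "local_max_point f c \<longleftrightarrow> (\<exists>e>0. \<forall>k. \<bar>k - c\<bar> < e \<longrightarrow> f k \<le> f c)"

definition inflection_point :: "(real \<Rightarrow> real) \<Rightarrow> real \<Rightarrow> bool" where
  "inflection_point f c \<longleftrightarrow> (\<exists>e>0.
     ((\<forall>k\<in>{c-e<..<c}. deriv (deriv f) k < 0) \<and> (\<forall>k\<in>{c<..<c+e}. deriv (deriv f) k > 0)) \<or>
     ((\<forall>k\<in>{c-e<..<c}. deriv (deriv f) k > 0) \<and> (\<forall>k\<in>{c<..<c+e}. deriv (deriv f) k < 0)))"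

end

theory Submission
  imports Defs "HOL-Real_Asymp.Real_Asymp"
begin

text \<open>Every derivative of the total function is again an exponential sum with positive
  coefficients and a single negative term, and the negative term has the fastest decay rate.
  Factoring out that term, the \<open>n\<close>-th derivative (multiplied by \<open>(-1)^n\<close>) becomes
  \<open>exp (k*b) * (A k - B)\<close> with \<open>A\<close> a positive exponential sum with positive rates, which increases
  strictly from \<open>0\<close> to \<open>\<infinity>\<close>. Hence each derivative changes sign exactly once; for \<open>S\<close>, \<open>S'\<close>
  and \<open>S''\<close> this gives the unique zero, maximum and inflection point.\<close>

text \<open>The \<open>n\<close>-th derivative of \<open>k \<mapsto> (\<Sum>i\<in>I. c i * exp (k * a i)) - d * exp (k * b)\<close>;
  the total function is the case \<open>n = 0\<close>, with rates \<open>a i = ln T\<^sub>p\<^sub>i\<close> and \<open>b = ln T\<^sub>m\<close>.\<close>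

definition exp_sum_deriv ::
    "'a set \<Rightarrow> ('a \<Rightarrow> real) \<Rightarrow> ('a \<Rightarrow> real) \<Rightarrow> real \<Rightarrow> real \<Rightarrow> nat \<Rightarrow> real \<Rightarrow> real" where
  "exp_sum_deriv I c a d b n k =
     (\<Sum>i\<in>I. c i * a i ^ n * exp (k * a i)) - d * b ^ n * exp (k * b)"

lemma exp_sum_deriv_has_derivative:
  "(exp_sum_deriv I c a d b n has_real_derivative exp_sum_deriv I c a d b (Suc n) k) (at k)"
  unfolding exp_sum_deriv_def
  by (auto intro!: derivative_eq_intros DERIV_sum simp: algebra_simps)

lemma deriv_exp_sum_deriv:
  "deriv (exp_sum_deriv I c a d b n) = exp_sum_deriv I c a d b (Suc n)"
  using exp_sum_deriv_has_derivative DERIV_imp_deriv by blast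

lemma exp_sum_deriv_tendsto_zero:
  assumes "\<forall>i\<in>I. a i < 0" and "b < 0"
  shows "(exp_sum_deriv I c a d b n \<longlongrightarrow> 0) at_top"
proof -
  have "((\<lambda>k. exp (k * r)) \<longlongrightarrow> 0) at_top" if "r < 0" for r :: real
    using that by real_asymp
  then have "((\<lambda>k. (\<Sum>i\<in>I. c i * a i ^ n * exp (k * a i)) - d * b ^ n * exp (k * b))
      \<longlongrightarrow> (\<Sum>i\<in>I. c i * a i ^ n * 0) - d * b ^ n * 0) at_top"
    using assms by (intro tendsto_intros) auto
  then show ?thesis
    unfolding exp_sum_deriv_def by simp
qed

lemma sgn_diff_strict_mono:
  fixes f :: "'a::linordered_idom \<Rightarrow> 'a"
  assumes "strict_mono f"
  shows "sgn (f x - f y) = sgn (x - y)"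
  using assms by (cases x y rule: linorder_cases) (auto dest: strict_monoD)

lemma pos_exp_sum_strict_mono:
  fixes w r :: "'a \<Rightarrow> real"
  assumes "finite I" and "I \<noteq> {}" and "\<forall>i\<in>I. w i > 0 \<and> r i > 0"
  shows "strict_mono (\<lambda>k. \<Sum>i\<in>I. w i * exp (k * r i))"
proof (rule strict_monoI)
  fix x y :: real
  assume "x < y"
  then show "(\<Sum>i\<in>I. w i * exp (x * r i)) < (\<Sum>i\<in>I. w i * exp (y * r i))"
    using assms by (intro sum_strict_mono) auto
qed

lemma pos_exp_sum_tendsto_zero_at_bot:
  fixes w r :: "'a \<Rightarrow> real"
  assumes "\<forall>i\<in>I. r i > 0"
  shows "((\<lambda>k. \<Sum>i\<in>I. w i * exp (k * r i)) \<longlongrightarrow> 0) at_bot"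
proof -
  have exp_lim: "((\<lambda>k. exp (k * \<rho>)) \<longlongrightarrow> 0) at_bot" if "\<rho> > 0" for \<rho> :: real
    using that by real_asymp
  have "((\<lambda>k. w i * exp (k * r i)) \<longlongrightarrow> w i * 0) at_bot" if "i \<in> I" for i
    using assms that by (intro tendsto_mult_left exp_lim) auto
  then have "((\<lambda>k. \<Sum>i\<in>I. w i * exp (k * r i)) \<longlongrightarrow> (\<Sum>i\<in>I. w i * 0)) at_bot"
    by (rule tendsto_sum)
  then show ?thesis by simp
qed

lemma pos_exp_sum_tendsto_at_top:
  fixes w r :: "'a \<Rightarrow> real"
  assumes "finite I" and "I \<noteq> {}" and "\<forall>i\<in>I. w i > 0 \<and> r i > 0"
  shows "filterlim (\<lambda>k. \<Sum>i\<in>I. w i * exp (k * r i)) at_top at_top"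
proof -
  obtain j where "j \<in> I" using assms(2) by blast
  have exp_lim: "filterlim (\<lambda>k. \<omega> * exp (k * \<rho>)) at_top at_top"
    if "\<omega> > 0" "\<rho> > 0" for \<omega> \<rho> :: real
    using that by real_asymp
  have "filterlim (\<lambda>k. w j * exp (k * r j)) at_top at_top"
    using \<open>j \<in> I\<close> assms(3) by (intro exp_lim) auto
  moreover have "w j * exp (k * r j) \<le> (\<Sum>i\<in>I. w i * exp (k * r i))" for k
    using \<open>j \<in> I\<close> assms by (intro member_le_sum) (auto simp: less_imp_le)
  ultimately show ?thesis
    by (auto intro: filterlim_at_top_mono)
qed

lemma pos_exp_sum_attains:
  fixes w r :: "'a \<Rightarrow> real" and B :: real
  assumes "finite I" and "I \<noteq> {}" and "\<forall>i\<in>I. w i > 0 \<and> r i > 0" and "B > 0"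
  obtains z where "(\<Sum>i\<in>I. w i * exp (z * r i)) = B"
proof -
  let ?A = "\<lambda>k. \<Sum>i\<in>I. w i * exp (k * r i)"
  have "eventually (\<lambda>k. ?A k < B) at_bot"
    using assms(3,4) by (intro order_tendstoD(2)[OF pos_exp_sum_tendsto_zero_at_bot]) auto
  then obtain x where x: "?A x < B"
    unfolding eventually_at_bot_linorder by blast
  have "eventually (\<lambda>k. B \<le> ?A k) at_top"
    using pos_exp_sum_tendsto_at_top[OF assms(1-3)] by (simp add: filterlim_at_top)
  then obtain N where N: "\<And>k. k \<ge> N \<Longrightarrow> B \<le> ?A k"
    unfolding eventually_at_top_linorder by blast
  have "continuous_on {x..max x N} ?A"
    by (intro continuous_intros)
  then obtain z where "?A z = B"
    using IVT'[of ?A x B "max x N"] x N[of "max x N"] by auto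
  then show ?thesis by (rule that)
qed

lemma exp_sum_deriv_factor:
  assumes "\<forall>i\<in>I. a i < 0" and "b < 0"
  shows "(-1) ^ n * exp_sum_deriv I c a d b n k =
    exp (k * b) * ((\<Sum>i\<in>I. c i * \<bar>a i\<bar> ^ n * exp (k * (a i - b))) - d * \<bar>b\<bar> ^ n)"
proof -
  have "(-1) ^ n * (c i * a i ^ n * exp (k * a i)) =
      exp (k * b) * (c i * \<bar>a i\<bar> ^ n * exp (k * (a i - b)))" if "i \<in> I" for i
  proof -
    have "exp (k * b) * exp (k * (a i - b)) = exp (k * a i)"
      by (simp add: exp_add[symmetric] algebra_simps)
    then show ?thesis
      using assms that by (simp add: abs_of_neg power_minus[of "a i"] algebra_simps)
  qed
  then have "(\<Sum>i\<in>I. (-1) ^ n * (c i * a i ^ n * exp (k * a i))) =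
      exp (k * b) * (\<Sum>i\<in>I. c i * \<bar>a i\<bar> ^ n * exp (k * (a i - b)))"
    unfolding sum_distrib_left by (auto intro!: sum.cong)
  moreover have "(-1) ^ n * (d * b ^ n * exp (k * b)) = exp (k * b) * (d * \<bar>b\<bar> ^ n)"
    using assms by (simp add: abs_of_neg power_minus[of b] algebra_simps)
  ultimately show ?thesis
    unfolding exp_sum_deriv_def by (simp add: sum_distrib_left right_diff_distrib)
qed

lemma exp_sum_deriv_sign_change:
  assumes "finite I" and "I \<noteq> {}" and "\<forall>i\<in>I. c i > 0 \<and> b < a i \<and> a i < 0" and "d > 0"
  obtains z where "\<And>k. sgn ((-1) ^ n * exp_sum_deriv I c a d b n k) = sgn (k - z)"
proof -
  have "b < 0"
    using assms(2,3) by force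
  let ?A = "\<lambda>k. \<Sum>i\<in>I. (c i * \<bar>a i\<bar> ^ n) * exp (k * (a i - b))"
  have weights: "\<forall>i\<in>I. c i * \<bar>a i\<bar> ^ n > 0 \<and> a i - b > 0"
    using assms(3) by auto
  have "d * \<bar>b\<bar> ^ n > 0"
    using \<open>d > 0\<close> \<open>b < 0\<close> by simp
  then obtain z where z: "?A z = d * \<bar>b\<bar> ^ n"
    by (rule pos_exp_sum_attains[OF assms(1,2) weights])
  have mono: "strict_mono ?A"
    using pos_exp_sum_strict_mono[OF assms(1,2) weights] .
  have "sgn ((-1) ^ n * exp_sum_deriv I c a d b n k) = sgn (k - z)" for k
  proof -
    have "sgn ((-1) ^ n * exp_sum_deriv I c a d b n k) = sgn (exp (k * b) * (?A k - ?A z))"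
      using exp_sum_deriv_factor[of I a b n c d k] assms(3) \<open>b < 0\<close> z by auto
    also have "\<dots> = sgn (?A k - ?A z)"
      by (simp add: sgn_mult)
    also have "\<dots> = sgn (k - z)"
      using mono by (rule sgn_diff_strict_mono)
    finally show ?thesis .
  qed
  then show ?thesis by (rule that)
qed

lemma local_max_point_iff_deriv_sign_change:
  fixes f f' :: "real \<Rightarrow> real"
  assumes deriv: "\<And>k. (f has_real_derivative f' k) (at k)"
    and sign: "\<And>k. sgn (f' k) = sgn (z - k)"
  shows "local_max_point f c \<longleftrightarrow> c = z"
proof
  assume "local_max_point f c"
  then obtain e where "e > 0" "\<forall>k. \<bar>c - k\<bar> < e \<longrightarrow> f k \<le> f c"
    unfolding local_max_point_def by (auto simp: abs_minus_commute)
  then have "f' c = 0"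
    using DERIV_local_max[OF deriv] by blast
  then show "c = z"
    using sign[of c] by (simp add: sgn_eq_0_iff)
next
  assume "c = z"
  have cont: "continuous_on A f" for A
    by (meson DERIV_isCont deriv continuous_at_imp_continuous_on)
  have "f k \<le> f z" for k
  proof (cases k z rule: linorder_cases)
    case less
    then show ?thesis
      using sign by (intro less_imp_le DERIV_pos_imp_increasing_open[OF less _ cont])
        (metis deriv sgn_greater diff_gt_0_iff_gt)
  next
    case greater
    then show ?thesis
      using sign by (intro less_imp_le DERIV_neg_imp_decreasing_open[OF greater _ cont])
        (metis deriv sgn_less diff_less_0_iff_less)
  qed simp
  then show "local_max_point f c"
    unfolding local_max_point_def \<open>c = z\<close> by (auto intro: exI[of _ 1])
qed

lemma inflection_point_iff_sign_change:
  assumes sign: "\<And>k. sgn (deriv (deriv f) k) = sgn (k - z)"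
  shows "inflection_point f c \<longleftrightarrow> c = z"
proof
  assume "inflection_point f c"
  then obtain e where "e > 0" and opposite_signs:
    "((\<forall>k\<in>{c-e<..<c}. deriv (deriv f) k < 0) \<and> (\<forall>k\<in>{c<..<c+e}. deriv (deriv f) k > 0)) \<or>
     ((\<forall>k\<in>{c-e<..<c}. deriv (deriv f) k > 0) \<and> (\<forall>k\<in>{c<..<c+e}. deriv (deriv f) k < 0))"
    unfolding inflection_point_def by blast
  show "c = z"
  proof (rule ccontr)
    assume "c \<noteq> z"
    define m where "m = min e \<bar>c - z\<bar> / 2"
    have "m > 0" "m < e" "m < \<bar>c - z\<bar>"
      using \<open>e > 0\<close> \<open>c \<noteq> z\<close> unfolding m_def by (auto simp: min_def)
    then have "sgn (deriv (deriv f) (c - m)) = sgn (deriv (deriv f) (c + m))"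
      unfolding sign by (auto simp: sgn_if)
    moreover have "c - m \<in> {c-e<..<c}" "c + m \<in> {c<..<c+e}"
      using \<open>m > 0\<close> \<open>m < e\<close> by auto
    then have "deriv (deriv f) (c - m) * deriv (deriv f) (c + m) < 0"
      using opposite_signs by (auto simp: mult_neg_pos mult_pos_neg)
    ultimately show False
      by (auto simp: sgn_if mult_less_0_iff split: if_splits)
  qed
next
  assume "c = z"
  have "deriv (deriv f) k < 0 \<longleftrightarrow> k < z" "deriv (deriv f) k > 0 \<longleftrightarrow> k > z" for k
    using sign[of k] by (metis sgn_less diff_less_0_iff_less, metis sgn_greater diff_gt_0_iff_gt)
  then show "inflection_point f c"
    unfolding inflection_point_def \<open>c = z\<close> by (auto intro: exI[of _ 1])
qed

lemma concave_convex_at_sign_change: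
  fixes f f' f'' :: "real \<Rightarrow> real"
  assumes "\<And>k. (f has_real_derivative f' k) (at k)"
    and "\<And>k. (f' has_real_derivative f'' k) (at k)"
    and sign: "\<And>k. sgn (f'' k) = sgn (k - z)"
  shows "concave_on {..z} f" and "convex_on {z..} f"
proof -
  have "f'' k \<le> 0" if "k \<le> z" for k
    using sign[of k] that by (auto simp: sgn_if split: if_splits)
  then show "concave_on {..z} f"
    using assms(1,2) by (intro f''_le0_imp_concave) auto
  have "f'' k \<ge> 0" if "k \<ge> z" for k
    using sign[of k] that by (auto simp: sgn_if split: if_splits)
  then show "convex_on {z..} f"
    using assms(1,2) by (intro f''_ge0_imp_convex) auto
qed

lemma total_fun_as_exp_sum:
  fixes Cp Tp :: "nat \<Rightarrow> real"
  assumes "Cp0 > 0" and "0 < Tm" and "Tm < Tp0" and "Tp0 < 1"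
    and "\<And>i. i \<in> {1..N} \<Longrightarrow> Cp i > 0"
    and "\<And>i. i \<in> {1..N} \<Longrightarrow> Tm < Tp i \<and> Tp i < 1"
  obtains c a where "total_fun Cp0 Tp0 Cm Tm N Cp Tp = exp_sum_deriv {0..N} c a Cm (ln Tm) 0"
    and "\<forall>i\<in>{0..N}. c i > 0 \<and> ln Tm < a i \<and> a i < 0"
proof
  define T where "T i = (if i = 0 then Tp0 else Tp i)" for i :: nat
  have bounds: "Tm < T i \<and> T i < 1" if "i \<in> {0..N}" for i
    using assms(4,6) \<open>Tm < Tp0\<close> that unfolding T_def by auto
  have "ln Tm < ln (T i) \<and> ln (T i) < 0" if "i \<in> {0..N}" for i
    using bounds[OF that] \<open>0 < Tm\<close> by simp
  then show "\<forall>i\<in>{0..N}. (if i = 0 then Cp0 else Cp i) > 0 \<and> ln Tm < ln (T i) \<and> ln (T i) < 0"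
    using assms(1,5) by auto
  show "total_fun Cp0 Tp0 Cm Tm N Cp Tp =
      exp_sum_deriv {0..N} (\<lambda>i. if i = 0 then Cp0 else Cp i) (\<lambda>i. ln (T i)) Cm (ln Tm) 0"
  proof
    fix k
    have "Tp i > 0" if "i \<in> {1..N}" for i
      using bounds[of i] that \<open>0 < Tm\<close> unfolding T_def by auto
    then have "(\<Sum>i=1..N. Cp i * Tp i powr k) = (\<Sum>i=1..N. Cp i * exp (k * ln (Tp i)))"
      by (intro sum.cong) (simp_all add: powr_def less_imp_neq[symmetric])
    then show "total_fun Cp0 Tp0 Cm Tm N Cp Tp k =
        exp_sum_deriv {0..N} (\<lambda>i. if i = 0 then Cp0 else Cp i) (\<lambda>i. ln (T i)) Cm (ln Tm) 0 k"
      using \<open>0 < Tm\<close> \<open>Tm < Tp0\<close> unfolding total_fun_def exp_sum_deriv_def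
      by (simp add: sum.atLeast_Suc_atMost[of 0] powr_def T_def mult.commute)
  qed
qed

theorem lemma3:
  fixes Cp0 Tp0 Cm Tm :: real and N :: nat and Cp Tp :: "nat \<Rightarrow> real"
  assumes "Cp0 > 0" and "Cm > 0" and "0 < Tm" and "Tm < Tp0" and "Tp0 < 1"
    and "\<And>i. i \<in> {1..N} \<Longrightarrow> Cp i > 0"
    and "\<And>i. i \<in> {1..N} \<Longrightarrow> Tm < Tp i \<and> Tp i < 1"
  defines "S \<equiv> total_fun Cp0 Tp0 Cm Tm N Cp Tp"
  shows "(\<exists>!k. S k = 0)
    \<and> (\<exists>!k. local_max_point S k)
    \<and> (\<exists>!c. inflection_point S c)
    \<and> (\<forall>c. inflection_point S c \<longrightarrow> concave_on {..c} S \<and> convex_on {c..} S)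
    \<and> (S \<longlongrightarrow> 0) at_top"
proof -
  obtain c a where S_exp_sum: "S = exp_sum_deriv {0..N} c a Cm (ln Tm) 0"
    and rates: "\<forall>i\<in>{0..N}. c i > 0 \<and> ln Tm < a i \<and> a i < 0"
    using total_fun_as_exp_sum[where N = N and Cp = Cp and Tp = Tp and Cm = Cm, OF assms(1,3-7)]
    unfolding S_def by blast
  define D where "D = exp_sum_deriv {0..N} c a Cm (ln Tm)"
  have S_eq: "S = D 0"
    unfolding S_exp_sum D_def ..
  have D_deriv: "(D n has_real_derivative D (Suc n) k) (at k)" for n k
    unfolding D_def by (rule exp_sum_deriv_has_derivative)
  have S_deriv2: "deriv (deriv S) = D 2"
    unfolding S_eq D_def deriv_exp_sum_deriv numeral_2_eq_2 ..
  obtain z0 where z0: "\<And>k. sgn (D 0 k) = sgn (k - z0)"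
    using exp_sum_deriv_sign_change[OF _ _ rates \<open>Cm > 0\<close>, of 0] unfolding D_def by auto
  obtain z1 where "\<And>k. sgn (- D 1 k) = sgn (k - z1)"
    using exp_sum_deriv_sign_change[OF _ _ rates \<open>Cm > 0\<close>, of 1] unfolding D_def by auto
  then have z1: "\<And>k. sgn (D 1 k) = sgn (z1 - k)"
    by (metis minus_diff_eq minus_minus sgn_minus)
  obtain z2 where z2: "\<And>k. sgn (D 2 k) = sgn (k - z2)"
    using exp_sum_deriv_sign_change[OF _ _ rates \<open>Cm > 0\<close>, of 2] unfolding D_def by auto
  have "S k = 0 \<longleftrightarrow> k = z0" for k
    using z0[of k] unfolding S_eq by (metis sgn_eq_0_iff right_minus_eq)
  moreover have "local_max_point S k \<longleftrightarrow> k = z1" for k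
    unfolding S_eq using D_deriv[of 0] z1
    by (intro local_max_point_iff_deriv_sign_change[where f' = "D 1"]) auto
  moreover have "inflection_point S k \<longleftrightarrow> k = z2" for k
    using z2 by (intro inflection_point_iff_sign_change) (simp add: S_deriv2)
  moreover have "concave_on {..z2} S" "convex_on {z2..} S"
    using concave_convex_at_sign_change[of S "D 1" "D 2" z2] D_deriv[of 0] D_deriv[of 1] z2
    unfolding S_eq by (simp_all add: numeral_2_eq_2)
  moreover have "(S \<longlongrightarrow> 0) at_top"
    unfolding S_exp_sum using rates
    by (intro exp_sum_deriv_tendsto_zero) (auto intro: less_trans)
  ultimately show ?thesis
    by simp
qed

end
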